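(* Let $\beta$ be a pseudo-Anosov 3-braid with MP-ratio $\alpha$, and for $k\ge0$ let $\epsilon_k=\operatorname{sgn}(x_k)\in\{\pm1\}$. Then for every $k\ge0$: (1) if $\epsilon_k=+1$ and the 4-tuple of $\mathcal T_{k+1}$ has Type 1, then $i_{k+1}=2i_k$; (2) if $\epsilon_k=+1$ and it has Type 2, then $i_{k+1}=2i_k-1$; (3) if $\epsilon_k=-1$ and it has Type 1, then $i_{k+1}=2i_k-1$; (4) if $\epsilon_k=-1$ and it has Type 2, then $i_{k+1}=2i_k$. Consequently $\epsilon_{k+1}=-1$ in Cases (1) and (4), and $\epsilon_{k+1}=+1$ in Cases (2) and (3). In particular, a Type 1 maximal splitting $\mathcal T_k\rightharpoonup\mathcal T_{k+1}$ changes the sign of the train track and a Type 2 maximal splitting preserves it.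
   Context: Identify $B_3$ with the mapping class group of the 3-punctured disk $D_3$. A measured train track on $D_3$ is a smooth graph with trivalent switches where the three edges are tangent, each edge with positive weight, the weight on one side of each switch equalling the sum of the two on the other; weights up to scaling. Maximal splitting $\tau\rightharpoonup\tau'$ splits simultaneously along all edges of largest weight. The paper fixes measured train tracks $\mathrm M(a,b),\mathrm W(a,b)$ ($a,b>0$) on $D_3$ with six edges and four switches. For a pseudo-Anosov 3-braid $\beta$ there is a unique irrational $\alpha\in(0,1)$ (the MP-ratio) such that exactly one of $\mathrm M(1,\alpha),\mathrm M(\alpha,1),\mathrm W(\alpha,1),\mathrm W(1,\alpha)$ is invariant under $\beta$; call it $\tau_0$, let $n=\lfloor1/\alpha\rfloor$ and $\tau_0\rightharpoonup\tau_1\rightharpoonup\cdots$ the maximal splitting sequence. From $\tau_{n+4}$ on all train tracks have exactly three distinct edge weights; set $\mathcal T_k=\tau_{n+3+k}$, $k\ge1$. The 4-tuple $(x_k,y_k;z_k,w_k)\in\mathbb Z^4$ of $\mathcal T_k$ is given by: smallest weight $\tfrac12(x_k+y_k\alpha)$, second smallest $\tfrac12(z_k+w_k\alpha)$; the sign of $\mathcal T_k$ is $\operatorname{sgn}(x_k)$ (nonzero). Set $(x_0,y_0;z_0,w_0)=(1,-n;0,1)$. For $k\ge0$ the 4-tuple of $\mathcal T_{k+1}$ is either $(z_k-x_k,w_k-y_k;x_k,y_k)$ (Type 1; the splitting $\mathcal T_k\rightharpoonup\mathcal T_{k+1}$ is then called Type 1) or $(x_k,y_k;z_k-x_k,w_k-y_k)$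 (Type 2). Farey data: $\frac st\boxplus\frac{s'}{t'}=\frac{s+s'}{t+t'}$; $L_0=\{\frac01,\frac11\}$ (not reduced); $L_{k+1}=L_k\cup\{a_{k,i}\boxplus a_{k,i+1}:1\le i\le 2^k\}$ listed increasingly as $a_{k+1,1}<\cdots<a_{k+1,2^{k+1}+1}$; $I_{k,i}=\left(\frac1{n+a_{k,i+1}},\frac1{n+a_{k,i}}\right)$; $i_k$ is the unique index with $\alpha\in I_{k,i_k}$. *)

theory Defs
  imports Complex_Main
begin

fun mediant_insert :: "(nat \<times> nat) list \<Rightarrow> (nat \<times> nat) list" where
  "mediant_insert [] = []"
| "mediant_insert [p] = [p]"
| "mediant_insert ((s,t) # (s',t') # rest) =
     (s,t) # (s + s', t + t') # mediant_insert ((s',t') # rest)"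

fun farey_list :: "nat \<Rightarrow> (nat \<times> nat) list" where
  "farey_list 0 = [(0,1),(1,1)]"
| "farey_list (Suc k) = mediant_insert (farey_list k)"

(* a_{k,i}, 1-indexed, as a real number *)
definition farey_a :: "nat \<Rightarrow> nat \<Rightarrow> real" where
  "farey_a k i = (let (s,t) = farey_list k ! (i - 1) in real s / real t)"

definition farey_interval :: "nat \<Rightarrow> nat \<Rightarrow> nat \<Rightarrow> real set" where
  "farey_interval n k i =
     {1 / (real n + farey_a k (i + 1)) <..< 1 / (real n + farey_a k i)}"

definition mp_n :: "real \<Rightarrow> nat" where
  "mp_n \<alpha> = nat \<lfloor>1 / \<alpha>\<rfloor>"

definition farey_index :: "real \<Rightarrow> nat \<Rightarrow> nat" where
  "farey_index \<alpha> k = (THE i. 1 \<le> i \<and> i \<le> 2 ^ k \<and> \<alpha> \<in> farey_interval (mp_n \<alpha>) k i)"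

definition type1_step :: "int \<times> int \<times> int \<times> int \<Rightarrow> int \<times> int \<times> int \<times> int \<Rightarrow> bool" where
  "type1_step t t' = (case t of (x,y,z,w) \<Rightarrow> t' = (z - x, w - y, x, y))"

definition type2_step :: "int \<times> int \<times> int \<times> int \<Rightarrow> int \<times> int \<times> int \<times> int \<Rightarrow> bool" where
  "type2_step t t' = (case t of (x,y,z,w) \<Rightarrow> t' = (x, y, z - x, w - y))"

end

(*
  Encode the 4-tuple (x, y; z, w) by two integer vectors: A = (x, y), the coefficients of the
  smallest weight x + y alpha, and B = (z - x, w - y), those of the gap between the two smallest
  weights. A Type 1 splitting maps (A, B) to (B, A - B), a Type 2 splitting to (A, B - A).

  To a fraction p/q attach v = (q, -p - n q). Its weight is alpha (q (1/alpha - n) - p), which is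
  positive iff p/q < 1/alpha - n, and the mediant of two fractions corresponds to the sum of their
  vectors. By induction on k, (A, B) is (v_j, -v_(j+1)) when the sign is +1 and (-v_(j+1), v_j)
  when it is -1, for consecutive entries of L_k; either splitting reproduces this shape at index
  2j or 2j+1 of L_(k+1), the sign being read off from the shape. Positivity of the weights of A
  and B then says a_(k,j+1) < 1/alpha - n < a_(k,j+2), i.e. alpha lies in I_(k,j+1).
*)

theory Submission
  imports Defs "HOL-Library.Product_Plus"
begin

lemma length_mediant_insert: "L \<noteq> [] \<Longrightarrow> length (mediant_insert L) = 2 * length L - 1"
  by (induction L rule: mediant_insert.induct) auto

lemma nth_mediant_insert_even: "j < length L \<Longrightarrow> mediant_insert L ! (2 * j) = L ! j"
  by (induction L arbitrary: j rule: mediant_insert.induct) (auto simp: nth_Cons split: nat.split)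

lemma nth_mediant_insert_odd:
  "Suc j < length L \<Longrightarrow> mediant_insert L ! Suc (2 * j) = L ! j + L ! Suc j"
  by (induction L arbitrary: j rule: mediant_insert.induct) (auto simp: nth_Cons split: nat.split)

lemma mediant_insert_Cons: "\<exists>M. mediant_insert (p # L) = p # M"
  by (cases p; cases L) auto

lemma length_farey_list: "length (farey_list k) = 2 ^ k + 1"
proof (induction k)
  case (Suc k)
  then have "farey_list k \<noteq> []" by auto
  with Suc show ?case by (simp add: length_mediant_insert)
qed simp

lemma farey_list_denominators_pos: "\<forall>p\<in>set (farey_list k). 0 < snd p"
proof (induction k)
  case (Suc k)
  have "\<forall>p\<in>set L. 0 < snd p \<Longrightarrow> \<forall>p\<in>set (mediant_insert L). 0 < snd p" for L :: "(nat \<times> nat) list"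
    by (induction L rule: mediant_insert.induct) auto
  with Suc show ?case by simp
qed simp

definition ratio :: "nat \<times> nat \<Rightarrow> real" where
  "ratio p = real (fst p) / real (snd p)"

lemma ratio_mediant_between:
  assumes "0 < snd p" "0 < snd q" "ratio p < ratio q"
  shows "ratio p < ratio (p + q)" "ratio (p + q) < ratio q"
  using assms by (auto simp: ratio_def field_simps)

lemma sorted_mediant_insert:
  "\<forall>p\<in>set L. 0 < snd p \<Longrightarrow> sorted_wrt (<) (map ratio L) \<Longrightarrow>
   sorted_wrt (<) (map ratio (mediant_insert L))"
proof (induction L rule: mediant_insert.induct)
  case (3 s t s' t' rest)
  let ?p = "(s, t)" and ?q = "(s', t')"
  obtain M where M: "mediant_insert (?q # rest) = ?q # M"
    using mediant_insert_Cons by blast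
  have "ratio ?p < ratio ?q"
    using "3.prems"(2) by (simp add: sorted_wrt2)
  then have "ratio ?p < ratio (?p + ?q)" "ratio (?p + ?q) < ratio ?q"
    using ratio_mediant_between "3.prems"(1) by auto
  moreover have "sorted_wrt (<) (map ratio (?q # M))"
    using 3 M by (simp add: sorted_wrt2)
  ultimately show ?case
    using M by (simp only: mediant_insert.simps list.map sorted_wrt2[OF transp_on_less]) simp
qed auto

lemma sorted_farey_list: "sorted_wrt (<) (map ratio (farey_list k))"
  by (induction k) (simp add: ratio_def, simp add: sorted_mediant_insert farey_list_denominators_pos)

lemma farey_a_eq_ratio: "farey_a k (Suc j) = ratio (farey_list k ! j)"
  by (simp add: farey_a_def ratio_def case_prod_beta)

lemma farey_a_mono:
  "i \<le> j \<Longrightarrow> j \<le> 2 ^ k \<Longrightarrow> farey_a k (Suc i) \<le> farey_a k (Suc j)"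
  using sorted_wrt_nth_less[OF sorted_farey_list, of i j k]
  by (cases "i = j") (simp_all add: farey_a_eq_ratio length_farey_list)

lemma farey_list_Suc_nth:
  assumes "j < 2 ^ k"
  shows "farey_list (Suc k) ! (2 * j) = farey_list k ! j"
    and "farey_list (Suc k) ! Suc (2 * j) = farey_list k ! j + farey_list k ! Suc j"
    and "farey_list (Suc k) ! Suc (Suc (2 * j)) = farey_list k ! Suc j"
  using nth_mediant_insert_even[of j "farey_list k"] nth_mediant_insert_even[of "Suc j" "farey_list k"]
    nth_mediant_insert_odd[of j "farey_list k"] assms
  by (simp_all add: length_farey_list)

lemma farey_list_nth_denominator_pos: "j \<le> 2 ^ k \<Longrightarrow> 0 < snd (farey_list k ! j)"
  using farey_list_denominators_pos[of k] nth_mem[of j "farey_list k"] by (simp add: length_farey_list)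

lemma mem_farey_interval_iff:
  assumes "0 < n" "0 < \<alpha>"
  shows "\<alpha> \<in> farey_interval n k i \<longleftrightarrow>
    farey_a k i < 1 / \<alpha> - n \<and> 1 / \<alpha> - n < farey_a k (Suc i)"
proof -
  have "0 \<le> farey_a k i" "0 \<le> farey_a k (Suc i)"
    by (simp_all add: farey_a_def case_prod_beta)
  then have "0 < n + farey_a k i" "0 < n + farey_a k (Suc i)"
    using assms(1) by simp_all
  then show ?thesis
    using assms(2) by (auto simp: farey_interval_def field_simps)
qed

lemma mp_n_pos: "0 < \<alpha> \<Longrightarrow> \<alpha> < 1 \<Longrightarrow> 0 < mp_n \<alpha>"
proof -
  assume "0 < \<alpha>" "\<alpha> < 1"
  then have "1 \<le> 1 / \<alpha>" by simp
  then show ?thesis by (simp add: mp_n_def le_floor_iff)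
qed

lemma farey_index_eqI:
  assumes "0 < \<alpha>" "\<alpha> < 1" "j < 2 ^ k"
    and "farey_a k (Suc j) < 1 / \<alpha> - mp_n \<alpha>" "1 / \<alpha> - mp_n \<alpha> < farey_a k (Suc (Suc j))"
  shows "farey_index \<alpha> k = Suc j"
  unfolding farey_index_def
proof (rule the_equality)
  note mem = mem_farey_interval_iff[OF mp_n_pos[OF assms(1,2)] assms(1)]
  show "1 \<le> Suc j \<and> Suc j \<le> 2 ^ k \<and> \<alpha> \<in> farey_interval (mp_n \<alpha>) k (Suc j)"
    using assms mem by simp
  fix i
  assume i: "1 \<le> i \<and> i \<le> 2 ^ k \<and> \<alpha> \<in> farey_interval (mp_n \<alpha>) k i"
  then obtain j' where j': "i = Suc j'" "j' < 2 ^ k"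
    by (cases i) auto
  with i mem have "farey_a k (Suc j') < 1 / \<alpha> - mp_n \<alpha>" "1 / \<alpha> - mp_n \<alpha> < farey_a k (Suc (Suc j'))"
    by simp_all
  with assms(3-5) j'(2) show "i = Suc j"
    using farey_a_mono[of "Suc j" j' k] farey_a_mono[of "Suc j'" j k]
    by (cases "j < j'"; cases "j' < j") (auto simp: j'(1))
qed

definition fraction_vec :: "nat \<Rightarrow> nat \<times> nat \<Rightarrow> int \<times> int" where
  "fraction_vec n p = (int (snd p), - int (fst p) - int n * int (snd p))"

definition weight :: "real \<Rightarrow> int \<times> int \<Rightarrow> real" where
  "weight \<alpha> v = of_int (fst v) + of_int (snd v) * \<alpha>"

lemma fraction_vec_add: "fraction_vec n (p + q) = fraction_vec n p + fraction_vec n q"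
  by (simp add: fraction_vec_def algebra_simps)

lemma weight_uminus: "weight \<alpha> (- v) = - weight \<alpha> v"
  by (simp add: weight_def)

lemma weight_fraction_vec_pos_iff:
  assumes "0 < snd p" "0 < \<alpha>"
  shows "0 < weight \<alpha> (fraction_vec n p) \<longleftrightarrow> ratio p < 1 / \<alpha> - n"
    and "0 < weight \<alpha> (- fraction_vec n p) \<longleftrightarrow> 1 / \<alpha> - n < ratio p"
  using assms by (auto simp: weight_uminus weight_def fraction_vec_def ratio_def field_simps)

definition weight_vectors :: "int \<times> int \<times> int \<times> int \<Rightarrow> (int \<times> int) \<times> (int \<times> int)" where
  "weight_vectors t = (case t of (x, y, z, w) \<Rightarrow> ((x, y), (z - x, w - y)))"

lemma type1_step_weight_vectors:
  "type1_step t t' \<Longrightarrow> weight_vectors t = (A, B) \<Longrightarrow> weight_vectors t' = (B, A - B)"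
  by (cases t) (auto simp: type1_step_def weight_vectors_def)

lemma type2_step_weight_vectors:
  "type2_step t t' \<Longrightarrow> weight_vectors t = (A, B) \<Longrightarrow> weight_vectors t' = (A, B - A)"
  by (cases t) (auto simp: type2_step_def weight_vectors_def)

lemma weight_vectors_pos:
  assumes "case t of (x, y, z, w) \<Rightarrow>
             0 < real_of_int x + real_of_int y * \<alpha> \<and>
             real_of_int x + real_of_int y * \<alpha> < real_of_int z + real_of_int w * \<alpha>"
    and "weight_vectors t = (A, B)"
  shows "0 < weight \<alpha> A" "0 < weight \<alpha> B"
  using assms by (auto simp: weight_vectors_def weight_def algebra_simps split: prod.splits)

text \<open>Indices into
  \<open>farey_list\<close> are 0-based, so index \<open>j\<close> means \<open>i\<^sub>k = j + 1\<close>.\<close>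

definition positive_track :: "nat \<Rightarrow> nat \<Rightarrow> nat \<Rightarrow> int \<times> int \<times> int \<times> int \<Rightarrow> bool" where
  "positive_track n k j t \<longleftrightarrow> j < 2 ^ k \<and>
     weight_vectors t = (fraction_vec n (farey_list k ! j), - fraction_vec n (farey_list k ! Suc j))"

definition negative_track :: "nat \<Rightarrow> nat \<Rightarrow> nat \<Rightarrow> int \<times> int \<times> int \<times> int \<Rightarrow> bool" where
  "negative_track n k j t \<longleftrightarrow> j < 2 ^ k \<and>
     weight_vectors t = (- fraction_vec n (farey_list k ! Suc j), fraction_vec n (farey_list k ! j))"

lemma positive_track_step:
  assumes "positive_track n k j t"
  shows "type1_step t t' \<Longrightarrow> negative_track n (Suc k) (Suc (2 * j)) t'"
    and "type2_step t t' \<Longrightarrow> positive_track n (Suc k) (2 * j) t'"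
  using assms farey_list_Suc_nth[of j k]
  by (auto simp: positive_track_def negative_track_def fraction_vec_add
      dest!: type1_step_weight_vectors type2_step_weight_vectors)

lemma negative_track_step:
  assumes "negative_track n k j t"
  shows "type1_step t t' \<Longrightarrow> positive_track n (Suc k) (2 * j) t'"
    and "type2_step t t' \<Longrightarrow> negative_track n (Suc k) (Suc (2 * j)) t'"
  using assms farey_list_Suc_nth[of j k]
  by (auto simp: positive_track_def negative_track_def fraction_vec_add
      dest!: type1_step_weight_vectors type2_step_weight_vectors)

lemma track_exists:
  assumes "T 0 = (1, - int n, 0, 1)"
    and "\<And>k. type1_step (T k) (T (Suc k)) \<or> type2_step (T k) (T (Suc k))"
  shows "\<exists>j. positive_track n k j (T k) \<or> negative_track n k j (T k)"
proof (induction k)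
  case 0
  have "positive_track n 0 0 (T 0)"
    using assms(1) by (simp add: positive_track_def weight_vectors_def fraction_vec_def)
  then show ?case by blast
next
  case (Suc k)
  then obtain j where "positive_track n k j (T k) \<or> negative_track n k j (T k)"
    by blast
  then show ?case
    using assms(2)[of k] positive_track_step negative_track_step by meson
qed

lemma sgn_fst_track:
  shows "positive_track n k j t \<Longrightarrow> sgn (fst t) = 1"
    and "negative_track n k j t \<Longrightarrow> sgn (fst t) = -1"
  using farey_list_nth_denominator_pos[of j k] farey_list_nth_denominator_pos[of "Suc j" k]
  by (auto simp: positive_track_def negative_track_def weight_vectors_def fraction_vec_def
      split: prod.splits)

lemma track_farey_index:
  assumes "0 < \<alpha>" "\<alpha> < 1"
    and "case t of (x, y, z, w) \<Rightarrow>
           0 < real_of_int x + real_of_int y * \<alpha> \<and>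
           real_of_int x + real_of_int y * \<alpha> < real_of_int z + real_of_int w * \<alpha>"
    and "positive_track (mp_n \<alpha>) k j t \<or> negative_track (mp_n \<alpha>) k j t"
  shows "farey_index \<alpha> k = Suc j"
proof -
  let ?v = "\<lambda>i. fraction_vec (mp_n \<alpha>) (farey_list k ! i)"
  have j: "j < 2 ^ k"
    using assms(4) by (auto simp: positive_track_def negative_track_def)
  obtain A B where AB: "weight_vectors t = (A, B)"
    by (cases "weight_vectors t")
  have "0 < weight \<alpha> (?v j) \<and> 0 < weight \<alpha> (- ?v (Suc j))"
    using assms(4) AB weight_vectors_pos[OF assms(3) AB]
    by (auto simp: positive_track_def negative_track_def)
  then show ?thesis
    using weight_fraction_vec_pos_iff[OF farey_list_nth_denominator_pos assms(1)] j
    by (intro farey_index_eqI[OF assms(1,2) j]) (simp_all add: farey_a_eq_ratio)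
qed

theorem corollary4p10:
  fixes \<alpha> :: real and T :: "nat \<Rightarrow> int \<times> int \<times> int \<times> int"
  assumes alpha_range: "0 < \<alpha>" "\<alpha> < 1"
    and alpha_irrational: "\<alpha> \<notin> \<rat>"
    and T0: "T 0 = (1, - int (mp_n \<alpha>), 0, 1)"
    and weights: "\<And>k. case T k of (x, y, z, w) \<Rightarrow>
                      0 < real_of_int x + real_of_int y * \<alpha> \<and>
                      real_of_int x + real_of_int y * \<alpha> < real_of_int z + real_of_int w * \<alpha>"
    and steps: "\<And>k. type1_step (T k) (T (Suc k)) \<or> type2_step (T k) (T (Suc k))"
    and sign_nonzero: "\<And>k. fst (T k) \<noteq> 0"
  shows "\<forall>k.
     (sgn (fst (T k)) = 1 \<and> type1_step (T k) (T (Suc k)) \<longrightarrow>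
        farey_index \<alpha> (Suc k) = 2 * farey_index \<alpha> k \<and> sgn (fst (T (Suc k))) = -1) \<and>
     (sgn (fst (T k)) = 1 \<and> type2_step (T k) (T (Suc k)) \<longrightarrow>
        farey_index \<alpha> (Suc k) = 2 * farey_index \<alpha> k - 1 \<and> sgn (fst (T (Suc k))) = 1) \<and>
     (sgn (fst (T k)) = -1 \<and> type1_step (T k) (T (Suc k)) \<longrightarrow>
        farey_index \<alpha> (Suc k) = 2 * farey_index \<alpha> k - 1 \<and> sgn (fst (T (Suc k))) = 1) \<and>
     (sgn (fst (T k)) = -1 \<and> type2_step (T k) (T (Suc k)) \<longrightarrow>
        farey_index \<alpha> (Suc k) = 2 * farey_index \<alpha> k \<and> sgn (fst (T (Suc k))) = -1) \<and>
     (type1_step (T k) (T (Suc k)) \<longrightarrow> sgn (fst (T (Suc k))) = - sgn (fst (T k))) \<and>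
     (type2_step (T k) (T (Suc k)) \<longrightarrow> sgn (fst (T (Suc k))) = sgn (fst (T k)))"
proof (rule allI, goal_cases)
  case (1 k)
  let ?n = "mp_n \<alpha>"
  have pos: "farey_index \<alpha> m = Suc i \<and> sgn (fst (T m)) = 1"
    if "positive_track ?n m i (T m)" for m i
    using track_farey_index[OF alpha_range weights] sgn_fst_track(1) that by blast
  have neg: "farey_index \<alpha> m = Suc i \<and> sgn (fst (T m)) = -1"
    if "negative_track ?n m i (T m)" for m i
    using track_farey_index[OF alpha_range weights] sgn_fst_track(2) that by blast
  obtain j where "positive_track ?n k j (T k) \<or> negative_track ?n k j (T k)"
    using track_exists[OF T0 steps] by blast
  then show ?case
  proof
    assume track: "positive_track ?n k j (T k)"
    show ?case
      using pos[OF track] positive_track_step(1)[OF track, THEN neg]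
        positive_track_step(2)[OF track, THEN pos] by auto
  next
    assume track: "negative_track ?n k j (T k)"
    show ?case
      using neg[OF track] negative_track_step(1)[OF track, THEN pos]
        negative_track_step(2)[OF track, THEN neg] by auto
  qed
qed

end
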